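(* Let $f\in\mathrm{Homeo}(\mathbb T^2)$ be semiconjugate to a rigid rotation $R_\rho$ of $\mathbb S^1$, and let $\Omega\subset\mathbb T^2$ be an $f$-invariant externally transitive set. Then for any two semiconjugacies $h_1,h_2$ from $f$ to $R_\rho$ there is a rigid rotation $R$ of $\mathbb S^1$ with $h_1|_\Omega=(R\circ h_2)|_\Omega$.
   Context: A semiconjugacy from $f$ to $R_\rho(x)=x+\rho$ is a continuous surjection $h:\mathbb T^2\to\mathbb S^1$ with $h\circ f=R_\rho\circ h$. An $f$-invariant set $\Omega$ is externally transitive if for all $x,y\in\Omega$ and neighbourhoods $U_x,U_y$ of $x,y$ in $\mathbb T^2$ there is $n\in\mathbb N$ with $f^n(U_x)\cap U_y\neq\emptyset$. *)

theory Defs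
  imports "HOL-Analysis.Analysis"
begin

definition S1 :: "complex set" where
  "S1 = sphere 0 1"

definition T2 :: "(complex \<times> complex) set" where
  "T2 = S1 \<times> S1"

text \<open>Rigid rotation by angle rho (in turns): x + rho on R/Z corresponds to multiplication
  by exp(2 pi i rho) on the unit circle.\<close>
definition rot :: "real \<Rightarrow> complex \<Rightarrow> complex" where
  "rot \<rho> z = cis (2 * pi * \<rho>) * z"

definition is_homeo_T2 :: "(complex \<times> complex \<Rightarrow> complex \<times> complex) \<Rightarrow> bool" where
  "is_homeo_T2 f \<longleftrightarrow> (\<exists>g. homeomorphism T2 T2 f g)"

definition semiconj :: "(complex \<times> complex \<Rightarrow> complex \<times> complex) \<Rightarrow> real
    \<Rightarrow> (complex \<times> complex \<Rightarrow> complex) \<Rightarrow> bool" where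
  "semiconj f \<rho> h \<longleftrightarrow> continuous_on T2 h \<and> h ` T2 = S1 \<and>
     (\<forall>x\<in>T2. h (f x) = rot \<rho> (h x))"

definition f_invariant :: "(complex \<times> complex \<Rightarrow> complex \<times> complex)
    \<Rightarrow> (complex \<times> complex) set \<Rightarrow> bool" where
  "f_invariant f \<Omega> \<longleftrightarrow> \<Omega> \<subseteq> T2 \<and> f ` \<Omega> = \<Omega>"

definition ext_transitive :: "(complex \<times> complex \<Rightarrow> complex \<times> complex)
    \<Rightarrow> (complex \<times> complex) set \<Rightarrow> bool" where
  "ext_transitive f \<Omega> \<longleftrightarrow>
     (\<forall>x\<in>\<Omega>. \<forall>y\<in>\<Omega>. \<forall>U V. openin (top_of_set T2) U \<longrightarrow> x \<in> U \<longrightarrow>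
        openin (top_of_set T2) V \<longrightarrow> y \<in> V \<longrightarrow>
        (\<exists>n::nat. n \<ge> 1 \<and> (f ^^ n) ` U \<inter> V \<noteq> {}))"

end

theory Submission
  imports Defs
begin

text \<open>Two semiconjugacies to the same rotation differ by the function g = h1 \<cdot> conj h2, which is
  continuous and f-invariant. An invariant continuous function cannot separate two points of an
  externally transitive set: disjoint neighbourhoods of their values pull back to neighbourhoods
  that some iterate of f connects. Hence g is a constant of modulus one on \<Omega>, i.e. a rotation.\<close>

lemma funpow_invariant:
  assumes "f ` S \<subseteq> S" and "\<And>x. x \<in> S \<Longrightarrow> g (f x) = g x" and "x \<in> S"
  shows "g ((f ^^ n) x) = g x"
proof -
  have "(f ^^ n) x \<in> S \<and> g ((f ^^ n) x) = g x"
    by (induction n) (use assms in auto)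
  then show ?thesis by blast
qed

lemma ext_transitive_invariant_const:
  fixes g :: "complex \<times> complex \<Rightarrow> 'a::t2_space"
  assumes "ext_transitive f \<Omega>" and "\<Omega> \<subseteq> T2" and "f ` T2 \<subseteq> T2"
    and "continuous_on T2 g" and "\<And>x. x \<in> T2 \<Longrightarrow> g (f x) = g x"
    and "x \<in> \<Omega>" and "y \<in> \<Omega>"
  shows "g x = g y"
proof (rule ccontr)
  assume "g x \<noteq> g y"
  then obtain A B where "open A" "open B" "g x \<in> A" "g y \<in> B" "A \<inter> B = {}"
    by (meson separation_t2)
  define U where "U = T2 \<inter> g -` A"
  define V where "V = T2 \<inter> g -` B"
  have U: "openin (top_of_set T2) U" and V: "openin (top_of_set T2) V"
    unfolding U_def V_def using assms(4) \<open>open A\<close> \<open>open B\<close>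
    by (auto intro: continuous_openin_preimage_gen)
  have "x \<in> U" "y \<in> V"
    using assms(2,6,7) \<open>g x \<in> A\<close> \<open>g y \<in> B\<close> by (auto simp: U_def V_def)
  then obtain n where "(f ^^ n) ` U \<inter> V \<noteq> {}"
    using assms(1)[unfolded ext_transitive_def, rule_format, OF assms(6,7) U _ V] by blast
  then obtain u where "u \<in> U" "(f ^^ n) u \<in> V" by blast
  then have "g ((f ^^ n) u) \<in> A \<inter> B"
    using funpow_invariant[of f T2 g, OF assms(3,5)] by (simp add: U_def V_def)
  with \<open>A \<inter> B = {}\<close> show False by blast
qed

lemma unit_complex_mult_cnj: "norm (z::complex) = 1 \<Longrightarrow> z * cnj z = 1"
  using complex_norm_square[of z] by simp

lemma semiconj_quotient_invariant:
  assumes "semiconj f \<rho> h1" and "semiconj f \<rho> h2" and "x \<in> T2"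
  shows "h1 (f x) * cnj (h2 (f x)) = h1 x * cnj (h2 x)"
proof -
  have "h1 (f x) * cnj (h2 (f x)) = (cis (2*pi*\<rho>) * cnj (cis (2*pi*\<rho>))) * (h1 x * cnj (h2 x))"
    using assms unfolding semiconj_def rot_def by (simp add: mult_ac)
  then show ?thesis
    by (simp add: unit_complex_mult_cnj)
qed

lemma unit_complex_is_rot:
  assumes "norm c = 1"
  obtains \<theta> where "\<And>z. rot \<theta> z = c * z"
proof
  have "c \<noteq> 0" using assms by auto
  show "rot (Arg c / (2*pi)) z = c * z" for z
    using cis_Arg[OF \<open>c \<noteq> 0\<close>] assms by (simp add: rot_def sgn_div_norm)
qed

theorem mainTheorem7:
  fixes f :: "complex \<times> complex \<Rightarrow> complex \<times> complex"
    and \<rho> :: real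
    and \<Omega> :: "(complex \<times> complex) set"
    and h1 h2 :: "complex \<times> complex \<Rightarrow> complex"
  assumes "is_homeo_T2 f"
    and "\<exists>h. semiconj f \<rho> h"
    and "f_invariant f \<Omega>"
    and "ext_transitive f \<Omega>"
    and "semiconj f \<rho> h1"
    and "semiconj f \<rho> h2"
  shows "\<exists>\<theta>::real. \<forall>x\<in>\<Omega>. h1 x = rot \<theta> (h2 x)"
proof (cases "\<Omega> = {}")
  case False
  define g where "g x = h1 x * cnj (h2 x)" for x
  have unit: "norm (h1 x) = 1" "norm (h2 x) = 1" if "x \<in> T2" for x
    using assms(5,6) that unfolding semiconj_def S1_def by auto
  have "\<Omega> \<subseteq> T2" using assms(3) unfolding f_invariant_def by blast
  have "f ` T2 \<subseteq> T2" using assms(1) unfolding is_homeo_T2_def homeomorphism_def by blast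
  have "continuous_on T2 g"
    using assms(5,6) unfolding g_def semiconj_def by (intro continuous_intros) auto
  moreover have "g (f x) = g x" if "x \<in> T2" for x
    using semiconj_quotient_invariant[OF assms(5,6) that] by (simp add: g_def)
  ultimately have const: "g x = g y" if "x \<in> \<Omega>" "y \<in> \<Omega>" for x y
    by (rule ext_transitive_invariant_const[OF assms(4) \<open>\<Omega> \<subseteq> T2\<close> \<open>f ` T2 \<subseteq> T2\<close> _ _ that])
  obtain x0 where "x0 \<in> \<Omega>" using False by blast
  then have "x0 \<in> T2" using \<open>\<Omega> \<subseteq> T2\<close> by blast
  then have "norm (g x0) = 1" using unit by (simp add: g_def norm_mult)
  then obtain \<theta> where \<theta>: "\<And>z. rot \<theta> z = g x0 * z" using unit_complex_is_rot by blast
  have "h1 x = rot \<theta> (h2 x)" if "x \<in> \<Omega>" for x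
  proof -
    have "x \<in> T2" using that \<open>\<Omega> \<subseteq> T2\<close> by blast
    then have "h1 x = g x * h2 x"
      using unit_complex_mult_cnj[OF unit(2)[OF \<open>x \<in> T2\<close>]] by (simp add: g_def ac_simps)
    then show ?thesis using const[OF that \<open>x0 \<in> \<Omega>\<close>] \<theta> by simp
  qed
  then show ?thesis by blast
qed simp

end
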